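(* Let $E$ be an imaginary quadratic field with ring of integers $\mathfrak{o}_E$ and fundamental discriminant $\Delta_E$, and let $\iota\in\mathrm{Emb}(\mathfrak{o}_E,\mathcal{O})$. Then $\iota(\mathfrak{o}_E)=\iota(E)\cap\mathcal{O}$, and there exists an element $a\in\iota(E)\cap V_D$ with $\mathrm{Nm}(a)=-\Delta_E$. Moreover, any such element $a$ belongs to $\iota(E)\cap L(\mathcal{O})$, and $\mathbb{Z}a=\iota(E)\cap L(\mathcal{O})$.
   Context: $D$ is a definite quaternion algebra over $\mathbb{Q}$ with standard involution $\sigma$, reduced norm $\mathrm{Nm}(x)=x\sigma(x)$, trace $\mathrm{Tr}(x)=x+\sigma(x)$; $\mathcal{O}$ is an Eichler order in $D$. $V_D=\{x\in D:\mathrm{Tr}(x)=0\}$ and $L(\mathcal{O})=\{x\in\mathbb{Z}+2\mathcal{O}:\mathrm{Tr}(x)=0\}$. An embedding $E\hookrightarrow D$ is an injective $\mathbb{Q}$-algebra homomorphism; $\mathrm{Emb}(\mathfrak{o}_E,\mathcal{O})$ (optimal embeddings) is the set of embeddings $\iota:E\hookrightarrow D$ such that $\iota(E)\cap\mathcal{O}$ is isomorphic to $\mathfrak{o}_E$ as a ring. *)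

theory Defs
  imports Complex_Main "HOL-Computational_Algebra.Squarefree"
begin

text \<open>Every quaternion algebra over Q is a Hamilton algebra (alpha,beta)_Q with
  Q-basis 1,i,j,k, i^2 = alpha, j^2 = beta, k = ij = -ji; it is definite iff
  alpha < 0 and beta < 0. Elements: Quat x0 x1 x2 x3 = x0 + x1 i + x2 j + x3 k.\<close>

datatype quat = Quat rat rat rat rat

definition qof_rat :: "rat \<Rightarrow> quat" where
  "qof_rat c = Quat c 0 0 0"

definition qadd :: "quat \<Rightarrow> quat \<Rightarrow> quat" where
  "qadd x y = (case x of Quat x0 x1 x2 x3 \<Rightarrow> case y of Quat y0 y1 y2 y3 \<Rightarrow>
      Quat (x0 + y0) (x1 + y1) (x2 + y2) (x3 + y3))"

definition qscale :: "rat \<Rightarrow> quat \<Rightarrow> quat" where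
  "qscale c x = (case x of Quat x0 x1 x2 x3 \<Rightarrow> Quat (c * x0) (c * x1) (c * x2) (c * x3))"

definition qneg :: "quat \<Rightarrow> quat" where
  "qneg x = qscale (-1) x"

definition qmul :: "rat \<Rightarrow> rat \<Rightarrow> quat \<Rightarrow> quat \<Rightarrow> quat" where
  "qmul a b x y = (case x of Quat x0 x1 x2 x3 \<Rightarrow> case y of Quat y0 y1 y2 y3 \<Rightarrow>
      Quat (x0*y0 + a*x1*y1 + b*x2*y2 - a*b*x3*y3)
           (x0*y1 + x1*y0 - b*x2*y3 + b*x3*y2)
           (x0*y2 + x2*y0 + a*x1*y3 - a*x3*y1)
           (x0*y3 + x3*y0 + x1*y2 - x2*y1))"

definition qconj :: "quat \<Rightarrow> quat" where
  "qconj x = (case x of Quat x0 x1 x2 x3 \<Rightarrow> Quat x0 (-x1) (-x2) (-x3))"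

definition qNm :: "rat \<Rightarrow> rat \<Rightarrow> quat \<Rightarrow> quat" where
  "qNm a b x = qmul a b x (qconj x)"

definition qTr :: "quat \<Rightarrow> quat" where
  "qTr x = qadd x (qconj x)"

definition definite_quat_params :: "rat \<Rightarrow> rat \<Rightarrow> bool" where
  "definite_quat_params a b \<longleftrightarrow> a < 0 \<and> b < 0"

definition V_D :: "quat set" where
  "V_D = {x. qTr x = qof_rat 0}"

definition full_lattice :: "quat set \<Rightarrow> bool" where
  "full_lattice L \<longleftrightarrow> (\<exists>e :: nat \<Rightarrow> quat.
      (\<forall>c :: nat \<Rightarrow> rat. foldr qadd (map (\<lambda>i. qscale (c i) (e i)) [0..<4]) (qof_rat 0) = qof_rat 0
          \<longrightarrow> (\<forall>i<4. c i = 0)) \<and>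
      L = {foldr qadd (map (\<lambda>i. qscale (of_int (n i)) (e i)) [0..<4]) (qof_rat 0) | n :: nat \<Rightarrow> int. True})"

definition quat_order :: "rat \<Rightarrow> rat \<Rightarrow> quat set \<Rightarrow> bool" where
  "quat_order a b Ord \<longleftrightarrow> full_lattice Ord \<and> qof_rat 1 \<in> Ord \<and>
     (\<forall>x\<in>Ord. \<forall>y\<in>Ord. qadd x y \<in> Ord \<and> qmul a b x y \<in> Ord) \<and> (\<forall>x\<in>Ord. qneg x \<in> Ord)"

definition maximal_order :: "rat \<Rightarrow> rat \<Rightarrow> quat set \<Rightarrow> bool" where
  "maximal_order a b Ord \<longleftrightarrow> quat_order a b Ord \<and>
     (\<forall>Ord'. quat_order a b Ord' \<and> Ord \<subseteq> Ord' \<longrightarrow> Ord' = Ord)"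

definition eichler_order :: "rat \<Rightarrow> rat \<Rightarrow> quat set \<Rightarrow> bool" where
  "eichler_order a b Ord \<longleftrightarrow> (\<exists>O1 O2. maximal_order a b O1 \<and> maximal_order a b O2 \<and> Ord = O1 \<inter> O2)"

definition L_lattice :: "quat set \<Rightarrow> quat set" where
  "L_lattice Ord = {x. (\<exists>n::int. \<exists>y\<in>Ord. x = qadd (qof_rat (of_int n)) (qscale 2 y)) \<and> qTr x = qof_rat 0}"

text \<open>E = Q(sqrt d), d a squarefree negative integer; (x,y) represents x + y sqrt d.\<close>
definition imag_quad_param :: "int \<Rightarrow> bool" where
  "imag_quad_param d \<longleftrightarrow> d < 0 \<and> squarefree d"

definition Eadd :: "rat \<times> rat \<Rightarrow> rat \<times> rat \<Rightarrow> rat \<times> rat" where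
  "Eadd z w = (fst z + fst w, snd z + snd w)"

definition Emul :: "int \<Rightarrow> rat \<times> rat \<Rightarrow> rat \<times> rat \<Rightarrow> rat \<times> rat" where
  "Emul d z w = (fst z * fst w + of_int d * snd z * snd w, fst z * snd w + snd z * fst w)"

definition Escale :: "rat \<Rightarrow> rat \<times> rat \<Rightarrow> rat \<times> rat" where
  "Escale c z = (c * fst z, c * snd z)"

definition Eone :: "rat \<times> rat" where "Eone = (1, 0)"

fun Epow :: "int \<Rightarrow> rat \<times> rat \<Rightarrow> nat \<Rightarrow> rat \<times> rat" where
  "Epow d z 0 = Eone"
| "Epow d z (Suc n) = Emul d z (Epow d z n)"

definition ring_of_integers :: "int \<Rightarrow> (rat \<times> rat) set" where
  "ring_of_integers d = {z. \<exists>(n::nat) (c::nat \<Rightarrow> int). n > 0 \<and>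
      foldr Eadd (map (\<lambda>i. Escale (of_int (c i)) (Epow d z i)) [0..<n]) (Epow d z n) = (0, 0)}"

definition fund_disc :: "int \<Rightarrow> int" where
  "fund_disc d = (if d mod 4 = 1 then d else 4 * d)"

definition quat_embedding :: "rat \<Rightarrow> rat \<Rightarrow> int \<Rightarrow> (rat \<times> rat \<Rightarrow> quat) \<Rightarrow> bool" where
  "quat_embedding a b d \<iota> \<longleftrightarrow> inj \<iota> \<and> \<iota> Eone = qof_rat 1 \<and>
     (\<forall>z w. \<iota> (Eadd z w) = qadd (\<iota> z) (\<iota> w)) \<and>
     (\<forall>c z. \<iota> (Escale c z) = qscale c (\<iota> z)) \<and>
     (\<forall>z w. \<iota> (Emul d z w) = qmul a b (\<iota> z) (\<iota> w))"

definition optimal_embeddings :: "rat \<Rightarrow> rat \<Rightarrow> int \<Rightarrow> quat set \<Rightarrow> (rat \<times> rat \<Rightarrow> quat) set" where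
  "optimal_embeddings a b d Ord = {\<iota>. quat_embedding a b d \<iota> \<and>
     (\<exists>\<phi>. bij_betw \<phi> (ring_of_integers d) (range \<iota> \<inter> Ord) \<and> \<phi> Eone = qof_rat 1 \<and>
        (\<forall>z\<in>ring_of_integers d. \<forall>w\<in>ring_of_integers d.
            \<phi> (Eadd z w) = qadd (\<phi> z) (\<phi> w) \<and> \<phi> (Emul d z w) = qmul a b (\<phi> z) (\<phi> w)))}"

end

theory Submission
  imports Defs "HOL-Computational_Algebra.Polynomial"
begin

(* Realise E = Q(sqrt d) inside C. An element z is integral iff its trace and norm are
   integers: for non-real z its characteristic polynomial divides every rational polynomial
   vanishing at z, and Gauss's lemma makes a monic factor of a monic integer polynomial
   integral. As d is squarefree this gives o_E = Z + Z omega with the usual omega.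
   An embedding iota sends sqrt d to a pure quaternion, so it commutes with conjugation and
   preserves trace and norm. A ring isomorphism phi from o_E onto iota(E) meet O sends omega to
   iota(v) with v a root of the characteristic polynomial of omega, i.e. v is omega or its
   conjugate; hence phi is iota composed with the identity or with conjugation, and both
   preserve o_E, so iota(o_E) = iota(E) meet O. Finally, the trace-zero part of Z + 2 o_E is
   Z (omega - conj omega), and omega - conj omega has norm -Delta_E. *)

lemma poly_map_poly_of_int_monic:
  assumes "lead_coeff P = 1"
  shows "poly (map_poly of_int P) (x :: 'a :: {comm_ring_1, ring_char_0})
    = (\<Sum>i<degree P. of_int (coeff P i) * x ^ i) + x ^ degree P"
  using assms by (simp add: poly_altdef degree_map_poly coeff_map_poly lessThan_Suc_atMost[symmetric])

lemma monic_poly_with_coeffs: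
  obtains P :: "int poly" where "lead_coeff P = 1" "degree P = n" "\<And>i. i < n \<Longrightarrow> coeff P i = c i"
proof
  define P where "P = monom 1 n + (\<Sum>i<n. monom (c i) i)"
  have coeff_P: "coeff P k = (if k = n then 1 else if k < n then c k else 0)" for k
    by (auto simp: P_def coeff_monom coeff_sum)
  show "degree P = n"
    by (rule antisym; (rule degree_le)?) (auto simp: coeff_P intro!: le_degree)
  then show "lead_coeff P = 1"
    by (simp add: coeff_P)
  show "coeff P i = c i" if "i < n" for i
    using that by (simp add: coeff_P)
qed

lemma map_poly_of_int_mult:
  "map_poly (of_int :: int \<Rightarrow> 'a::comm_ring_1) (p * q) = map_poly of_int p * map_poly of_int q"
  by (simp add: poly_eq_iff coeff_map_poly coeff_mult of_int_sum)

lemma map_poly_of_int_smult: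
  "map_poly (of_int :: int \<Rightarrow> 'a::comm_ring_1) (smult c p) = smult (of_int c) (map_poly of_int p)"
  by (simp add: map_poly_smult)

lemma map_poly_of_int_eq_iff [simp]:
  "map_poly (of_int :: int \<Rightarrow> 'a::ring_char_0) p = map_poly of_int q \<longleftrightarrow> p = q"
  by (simp add: poly_eq_iff coeff_map_poly)

lemma map_poly_of_rat_add:
  "map_poly (of_rat :: rat \<Rightarrow> 'a::field_char_0) (p + q) = map_poly of_rat p + map_poly of_rat q"
  by (simp add: poly_eq_iff coeff_map_poly of_rat_add)

lemma map_poly_of_rat_mult:
  "map_poly (of_rat :: rat \<Rightarrow> 'a::field_char_0) (p * q) = map_poly of_rat p * map_poly of_rat q"
  by (simp add: poly_eq_iff coeff_map_poly coeff_mult of_rat_sum of_rat_mult)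

lemma rat_poly_clear_denominators:
  fixes g :: "rat poly"
  obtains N :: int and G where "N > 0" "smult (of_int N) g = map_poly of_int G"
proof (induction g arbitrary: thesis)
  case 0
  show ?case
    by (rule 0[of 1 0]) simp_all
next
  case (pCons a p)
  obtain N G where N: "N > 0" and G: "smult (of_int N) p = map_poly of_int G"
    by (rule pCons.IH)
  obtain x y where "quotient_of a = (x, y)"
    by (cases "quotient_of a")
  then have y: "y > 0" and a: "a = of_int x / of_int y"
    by (simp_all add: quotient_of_denom_pos quotient_of_div)
  have "smult (of_int (N * y)) (pCons a p) = map_poly of_int (pCons (N * x) (smult y G))"
    using y by (simp add: map_poly_pCons map_poly_of_int_smult a mult.commute flip: G)
  moreover have "N * y > 0"
    using N y by simp
  ultimately show ?case
    by (intro pCons.prems)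
qed

lemma content_monic:
  fixes P :: "int poly"
  assumes "lead_coeff P = 1"
  shows "content P = 1"
  using content_dvd_coeff[of P "degree P"] assms normalize_content[of P] by simp

lemma monic_eq_mult_primitive_parts:
  fixes P F G :: "int poly"
  assumes "lead_coeff P = 1" and "c > 0" and "smult c P = F * G"
  shows "P = primitive_part F * primitive_part G"
proof -
  have "primitive_part (smult c P) = primitive_part F * primitive_part G"
    by (simp add: assms(3) primitive_part_mult)
  then show ?thesis
    using assms(1,2) by (simp add: primitive_part_smult primitive_part_prim content_monic)
qed

lemma monic_factor_of_monic_int_poly:
  fixes P :: "int poly" and f g :: "rat poly"
  assumes P: "lead_coeff P = 1" and f: "lead_coeff f = 1" and fg: "map_poly of_int P = f * g"
  shows "coeff f i \<in> \<int>"
proof -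
  obtain M F where M: "M > 0" and F: "smult (of_int M) f = map_poly of_int F"
    by (rule rat_poly_clear_denominators)
  obtain N G where N: "N > 0" and G: "smult (of_int N) g = map_poly of_int G"
    by (rule rat_poly_clear_denominators)
  have "map_poly (of_int :: int \<Rightarrow> rat) (smult (M * N) P) = map_poly of_int (F * G)"
    by (simp add: map_poly_of_int_smult map_poly_of_int_mult fg ac_simps flip: F G)
  then have "P = primitive_part F * primitive_part G"
    using M N by (intro monic_eq_mult_primitive_parts[OF P]) simp_all
  then have unit: "lead_coeff (primitive_part F) * lead_coeff (primitive_part G) = 1"
    using P by (simp add: lead_coeff_mult)
  have "of_int (lead_coeff F) = lead_coeff (map_poly (of_int :: int \<Rightarrow> rat) F)"
    by (simp add: degree_map_poly coeff_map_poly)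
  also have "\<dots> = of_int M"
    using f M by (simp flip: F)
  finally have content_lead: "content F * lead_coeff (primitive_part F) = M"
    by (metis content_times_primitive_part lead_coeff_smult of_int_eq_iff)
  moreover note unit
  moreover have "content F \<ge> 0"
    using normalize_content[of F] by (simp add: normalize_int_def)
  ultimately have "lead_coeff (primitive_part F) = 1"
    using M by (auto simp: zmult_eq_1_iff)
  with content_lead have "content F = M"
    by simp
  then have "F = smult M (primitive_part F)"
    using content_times_primitive_part[of F] by simp
  then have "smult (of_int M) f = smult (of_int M) (map_poly of_int (primitive_part F))"
    by (metis F map_poly_of_int_smult)
  then have "f = map_poly of_int (primitive_part F)"
    using M by (simp add: poly_eq_iff)
  then show ?thesis
    by (simp add: coeff_map_poly)
qed

lemma algebraic_int_of_rat_imp_Ints: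
  assumes "algebraic_int (of_rat c :: 'a :: field_char_0)"
  shows "c \<in> \<int>"
proof -
  have "(of_rat c :: 'a) \<in> \<int>"
    using assms rational_algebraic_int_is_int Rats_of_rat by blast
  then obtain k where "(of_rat c :: 'a) = of_int k"
    by (elim Ints_cases)
  then have "c = of_int k"
    by (metis of_rat_eq_iff of_rat_of_int_eq)
  then show ?thesis
    by simp
qed

lemma complex_of_rat_eq_of_real: "(of_rat c :: complex) = of_real (of_rat c)"
  by (cases c) (simp add: of_rat_rat)

text \<open>The remainder of \<open>Q\<close> modulo \<open>\<chi>\<close> is linear and has the non-real root \<open>\<zeta>\<close>, so it vanishes.\<close>

lemma quadratic_dvd_of_nonreal_root:
  fixes \<chi> Q :: "rat poly" and \<zeta> :: complex
  assumes "degree \<chi> = 2" and "Im \<zeta> \<noteq> 0"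
    and "poly (map_poly of_rat \<chi>) \<zeta> = 0" and "poly (map_poly of_rat Q) \<zeta> = 0"
  shows "\<chi> dvd Q"
proof -
  define r where "r = Q mod \<chi>"
  have "\<chi> \<noteq> 0"
    using assms(1) by auto
  then have "degree r < 2"
    using assms(1) degree_mod_less[of \<chi> Q] by (cases "r = 0") (auto simp: r_def)
  then have r: "r = [:coeff r 0, coeff r 1:]"
    by (simp add: poly_eq_iff coeff_pCons coeff_eq_0 split: nat.splits)
  have "Q = Q div \<chi> * \<chi> + r"
    by (simp add: r_def)
  then have "poly (map_poly of_rat r) \<zeta> = 0"
    using assms(3,4) by (metis add_0 map_poly_of_rat_add map_poly_of_rat_mult mult_zero_right poly_add
      poly_mult)
  then have "of_rat (coeff r 0) + of_rat (coeff r 1) * \<zeta> = 0"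
    by (subst (asm) r) (simp add: map_poly_pCons mult.commute)
  then have "coeff r 1 = 0" and "coeff r 0 = 0"
    using assms(2) by (auto simp: complex_eq_iff complex_of_rat_eq_of_real)
  then show ?thesis
    using r by (simp add: r_def mod_0_imp_dvd)
qed

definition Econj :: "rat \<times> rat \<Rightarrow> rat \<times> rat" where
  "Econj z = (fst z, - snd z)"

definition Etr :: "rat \<times> rat \<Rightarrow> rat" where
  "Etr z = 2 * fst z"

definition Enorm :: "int \<Rightarrow> rat \<times> rat \<Rightarrow> rat" where
  "Enorm d z = fst z ^ 2 - of_int d * snd z ^ 2"

lemma Emul_self_eq: "Emul d z z = Eadd (Escale (Etr z) z) (- Enorm d z, 0)"
  by (simp add: Emul_def Eadd_def Escale_def Etr_def Enorm_def power2_eq_square algebra_simps)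

lemma Emul_Econj: "Emul d z (Econj z) = (Enorm d z, 0)"
  by (simp add: Emul_def Econj_def Enorm_def power2_eq_square)

lemma Emul_rat_left: "Emul d (c, 0) z = Escale c z"
  by (simp add: Emul_def Escale_def)

lemma Econj_Eadd: "Econj (Eadd z w) = Eadd (Econj z) (Econj w)"
  by (simp add: Econj_def Eadd_def)

lemma Econj_Escale: "Econj (Escale c z) = Escale c (Econj z)"
  by (simp add: Econj_def Escale_def)

lemma Econj_rat [simp]: "Econj (c, 0) = (c, 0)"
  by (simp add: Econj_def)

lemma Econj_Econj [simp]: "Econj (Econj z) = z"
  by (simp add: Econj_def)

definition Ecomplex :: "int \<Rightarrow> rat \<times> rat \<Rightarrow> complex" where
  "Ecomplex d z = Complex (of_rat (fst z)) (of_rat (snd z) * sqrt (of_int (- d)))"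

lemma Ecomplex_rat [simp]: "Ecomplex d (c, 0) = of_rat c"
  by (simp add: Ecomplex_def complex_eq_iff complex_of_rat_eq_of_real)

lemma Ecomplex_Eone [simp]: "Ecomplex d Eone = 1"
  by (simp add: Eone_def)

lemma Ecomplex_Eadd: "Ecomplex d (Eadd z w) = Ecomplex d z + Ecomplex d w"
  by (simp add: Ecomplex_def Eadd_def of_rat_add distrib_right complex_eq_iff)

lemma Ecomplex_Escale: "Ecomplex d (Escale c z) = of_rat c * Ecomplex d z"
  by (simp add: Ecomplex_def Escale_def of_rat_mult complex_eq_iff complex_of_rat_eq_of_real)

lemma Ecomplex_Emul:
  assumes "d \<le> 0"
  shows "Ecomplex d (Emul d z w) = Ecomplex d z * Ecomplex d w"
proof -
  have "real_of_int d = - (sqrt (of_int (- d)) ^ 2)"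
    using assms by simp
  then show ?thesis
    by (simp add: Ecomplex_def Emul_def of_rat_add of_rat_mult complex_eq_iff power2_eq_square
      algebra_simps)
qed

lemma Ecomplex_Epow: "d \<le> 0 \<Longrightarrow> Ecomplex d (Epow d z n) = Ecomplex d z ^ n"
  by (induction n) (simp_all add: Ecomplex_Emul)

lemma Ecomplex_Econj: "Ecomplex d (Econj z) = cnj (Ecomplex d z)"
  by (simp add: Ecomplex_def Econj_def complex_eq_iff of_rat_minus)

lemma Ecomplex_inj:
  assumes "d < 0" and "Ecomplex d z = Ecomplex d w"
  shows "z = w"
  using assms by (auto simp: Ecomplex_def complex_eq_iff prod_eq_iff)

lemma Ecomplex_Etr: "Ecomplex d z + cnj (Ecomplex d z) = of_rat (Etr z)"
  by (simp add: Ecomplex_def Etr_def complex_eq_iff complex_of_rat_eq_of_real of_rat_mult)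

lemma Ecomplex_Enorm:
  assumes "d \<le> 0"
  shows "Ecomplex d z * cnj (Ecomplex d z) = of_rat (Enorm d z)"
proof -
  have "sqrt (of_int (- d)) * sqrt (of_int (- d)) = - real_of_int d"
    using assms by simp
  then show ?thesis
    by (simp add: Ecomplex_def Enorm_def complex_eq_iff of_rat_diff of_rat_mult power2_eq_square
      complex_of_rat_eq_of_real algebra_simps)
qed

lemma Ecomplex_char_poly_root:
  assumes "d \<le> 0"
  shows "poly (map_poly of_rat [:Enorm d z, - Etr z, 1:]) (Ecomplex d z) = 0"
proof -
  define \<zeta> where "\<zeta> = Ecomplex d z"
  have t: "of_rat (Etr z) = \<zeta> + cnj \<zeta>" and n: "of_rat (Enorm d z) = \<zeta> * cnj \<zeta>"
    using assms by (simp_all add: \<zeta>_def Ecomplex_Etr Ecomplex_Enorm)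
  have "poly (map_poly of_rat [:Enorm d z, - Etr z, 1:]) \<zeta>
      = of_rat (Enorm d z) + \<zeta> * (\<zeta> - of_rat (Etr z))"
    by (simp add: map_poly_pCons of_rat_minus)
  also have "\<dots> = 0"
    unfolding t n by (simp add: algebra_simps)
  finally show ?thesis
    by (simp add: \<zeta>_def)
qed

lemma char_poly_root_cases:
  assumes "d < 0" and "Emul d v v = Eadd (Escale (Etr z) v) (- Enorm d z, 0)"
  shows "v = z \<or> v = Econj z"
proof -
  define \<zeta> where "\<zeta> = Ecomplex d z"
  define x where "x = Ecomplex d v"
  have "x * x = of_rat (Etr z) * x - of_rat (Enorm d z)"
    using arg_cong[OF assms(2), of "Ecomplex d"] assms(1)
    by (simp add: x_def Ecomplex_Emul Ecomplex_Eadd Ecomplex_Escale of_rat_minus)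
  also have "\<dots> = (\<zeta> + cnj \<zeta>) * x - \<zeta> * cnj \<zeta>"
    using assms(1) by (simp add: \<zeta>_def Ecomplex_Etr Ecomplex_Enorm)
  finally have "(x - \<zeta>) * (x - cnj \<zeta>) = 0"
    by (simp add: algebra_simps)
  then have "Ecomplex d v = Ecomplex d z \<or> Ecomplex d v = Ecomplex d (Econj z)"
    by (simp add: x_def \<zeta>_def Ecomplex_Econj)
  then show ?thesis
    using Ecomplex_inj[OF assms(1)] by blast
qed

section \<open>The ring of integers\<close>

lemma Ecomplex_monic_sum:
  assumes "d \<le> 0"
  shows "Ecomplex d (foldr Eadd (map (\<lambda>i. Escale (of_int (c i)) (Epow d z i)) [0..<n]) (Epow d z n))
    = (\<Sum>i<n. of_int (c i) * Ecomplex d z ^ i) + Ecomplex d z ^ n"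
proof -
  have foldr: "Ecomplex d (foldr Eadd (map F xs) w) = (\<Sum>x\<leftarrow>xs. Ecomplex d (F x)) + Ecomplex d w"
    for F xs w by (induction xs) (simp_all add: Ecomplex_Eadd)
  show ?thesis
    using assms by (simp add: foldr Ecomplex_Escale Ecomplex_Epow sum_list_distinct_conv_sum_set
      atLeast0LessThan)
qed

lemma ring_of_integers_iff_algebraic_int:
  assumes "d < 0"
  shows "z \<in> ring_of_integers d \<longleftrightarrow> algebraic_int (Ecomplex d z)"
proof
  assume "z \<in> ring_of_integers d"
  then obtain n c where
    root: "foldr Eadd (map (\<lambda>i. Escale (of_int (c i)) (Epow d z i)) [0..<n]) (Epow d z n) = (0, 0)"
    unfolding ring_of_integers_def by blast
  obtain P where P: "lead_coeff P = 1" "degree P = n" "\<And>i. i < n \<Longrightarrow> coeff P i = c i"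
    using monic_poly_with_coeffs[of n c] by blast
  have "poly (map_poly of_int P) (Ecomplex d z)
      = (\<Sum>i<n. of_int (c i) * Ecomplex d z ^ i) + Ecomplex d z ^ n"
    using P by (simp add: poly_map_poly_of_int_monic)
  also have "\<dots> = Ecomplex d (0, 0)"
    using assms by (simp flip: root add: Ecomplex_monic_sum)
  also have "\<dots> = 0"
    by simp
  finally show "algebraic_int (Ecomplex d z)"
    unfolding algebraic_int_altdef_ipoly using P(1) by blast
next
  assume "algebraic_int (Ecomplex d z)"
  then obtain P where root: "poly (map_poly of_int P) (Ecomplex d z) = 0" and P: "lead_coeff P = 1"
    unfolding algebraic_int_altdef_ipoly by blast
  have "degree P > 0"
    using root P by (cases "degree P") (simp_all add: poly_map_poly_of_int_monic)
  moreover have "Ecomplex d (foldr Eadd (map (\<lambda>i. Escale (of_int (coeff P i)) (Epow d z i))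
      [0..<degree P]) (Epow d z (degree P))) = Ecomplex d (0, 0)"
    using assms root by (simp add: Ecomplex_monic_sum poly_map_poly_of_int_monic P)
  ultimately show "z \<in> ring_of_integers d"
    unfolding ring_of_integers_def using Ecomplex_inj[OF assms] by blast
qed

lemma algebraic_int_Ecomplex_iff:
  assumes "d < 0"
  shows "algebraic_int (Ecomplex d z) \<longleftrightarrow> Etr z \<in> \<int> \<and> Enorm d z \<in> \<int>"
proof
  assume "Etr z \<in> \<int> \<and> Enorm d z \<in> \<int>"
  then have "\<forall>i. coeff (map_poly of_rat [:Enorm d z, - Etr z, 1:]) i \<in> (\<int> :: complex set)"
    by (auto simp: coeff_pCons of_rat_minus map_poly_pCons split: nat.splits elim!: Ints_cases)
  then show "algebraic_int (Ecomplex d z)"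
    using Ecomplex_char_poly_root[of d z] assms
    by (intro algebraic_int.intros[of "map_poly of_rat [:Enorm d z, - Etr z, 1:]"])
      (simp_all add: map_poly_pCons)
next
  assume int: "algebraic_int (Ecomplex d z)"
  show "Etr z \<in> \<int> \<and> Enorm d z \<in> \<int>"
  proof (cases "snd z = 0")
    case True
    then have "fst z \<in> \<int>"
      using int algebraic_int_of_rat_imp_Ints by (metis Ecomplex_rat prod.collapse)
    then show ?thesis
      using True by (simp add: Etr_def Enorm_def)
  next
    case False
    define \<chi> where "\<chi> = [:Enorm d z, - Etr z, 1:]"
    obtain P where P: "lead_coeff P = 1" and root: "poly (map_poly of_int P) (Ecomplex d z) = 0"
      using int unfolding algebraic_int_altdef_ipoly by blast
    have "map_poly of_rat (map_poly of_int P) = (map_poly of_int P :: complex poly)"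
      by (simp add: map_poly_map_poly comp_def)
    then have "\<chi> dvd map_poly of_int P"
      using False assms root Ecomplex_char_poly_root[of d z]
      by (intro quadratic_dvd_of_nonreal_root[where \<zeta> = "Ecomplex d z"])
        (simp_all add: \<chi>_def Ecomplex_def)
    then obtain g where "map_poly of_int P = \<chi> * g"
      by (elim dvdE)
    then have "coeff \<chi> i \<in> \<int>" for i
      using P by (intro monic_factor_of_monic_int_poly) (simp_all add: \<chi>_def)
    from this[of 0] this[of 1] show ?thesis
      by (simp add: \<chi>_def)
  qed
qed

lemma squarefree_mult_square_in_Ints:
  fixes u :: rat
  assumes "squarefree d" and "of_int d * u ^ 2 \<in> \<int>"
  shows "u \<in> \<int>"
proof -
  obtain k where k: "of_int d * u ^ 2 = of_int k"
    using assms(2) by (elim Ints_cases)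
  obtain a b where "quotient_of u = (a, b)"
    by (cases "quotient_of u")
  then have b: "b > 0" and u: "u = of_int a / of_int b" and "coprime a b"
    by (simp_all add: quotient_of_denom_pos quotient_of_div quotient_of_coprime)
  have "of_int (d * a ^ 2) = (of_int (k * b ^ 2) :: rat)"
    using k b by (simp add: u field_simps)
  then have "b ^ 2 dvd d * a ^ 2"
    by (simp only: of_int_eq_iff) simp
  with \<open>coprime a b\<close> have "b ^ 2 dvd d"
    by (simp add: coprime_commute coprime_dvd_mult_left_iff)
  with assms(1) b have "b = 1"
    unfolding squarefree_def by fastforce
  then show ?thesis
    by (simp add: u)
qed

lemma int_square_mod_4: "(x :: int) ^ 2 mod 4 = (if even x then 0 else 1)"
proof (cases "even x")
  case True
  then obtain y where "x = 2 * y" ..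
  then show ?thesis
    by (simp add: power2_eq_square)
next
  case False
  then obtain y where "x = 2 * y + 1"
    using oddE by blast
  then have "x ^ 2 = 4 * (y ^ 2 + y) + 1"
    by (simp add: power2_eq_square algebra_simps)
  then show ?thesis
    using False by presburger
qed

lemma even_of_four_dvd_square_diff:
  fixes T U d :: int
  assumes "4 dvd T ^ 2 - d * U ^ 2" and "d mod 4 \<in> {2, 3}"
  shows "even T \<and> even U"
proof -
  have "(T ^ 2 mod 4 - (d mod 4) * (U ^ 2 mod 4)) mod 4 = (T ^ 2 - d * U ^ 2) mod 4"
    by (metis mod_diff_eq mod_diff_right_eq mod_mult_eq)
  with assms(1) have "(T ^ 2 mod 4 - (d mod 4) * (U ^ 2 mod 4)) mod 4 = 0"
    by simp
  then show ?thesis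
    using assms(2) by (auto simp: int_square_mod_4 split: if_splits)
qed

definition omega :: "int \<Rightarrow> rat \<times> rat" where
  "omega d = (if d mod 4 = 1 then (1/2, 1/2) else (0, 1))"

definition Z_omega :: "int \<Rightarrow> (rat \<times> rat) set" where
  "Z_omega d = {Eadd (of_int m, 0) (Escale (of_int n) (omega d)) | m n. True}"

lemma Z_omega_iff:
  "z \<in> Z_omega d \<longleftrightarrow> (\<exists>m n. z = (of_int m + of_int n * fst (omega d), of_int n * snd (omega d)))"
  by (simp add: Z_omega_def Eadd_def Escale_def)

lemma Z_omega_cases:
  assumes "u \<in> Z_omega d"
  obtains m n where "u = Eadd (of_int m, 0) (Escale (of_int n) (omega d))"
  using assms unfolding Z_omega_def by blast

lemma rat_in_Z_omega: "(of_int k, 0) \<in> Z_omega d"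
  unfolding Z_omega_iff by (rule exI[of _ k], rule exI[of _ 0]) simp

lemma Escale_omega_in_Z_omega: "Escale (of_int n) (omega d) \<in> Z_omega d"
  unfolding Z_omega_iff by (rule exI[of _ 0], rule exI[of _ n]) (simp add: Escale_def)

lemma omega_in_Z_omega: "omega d \<in> Z_omega d"
  using Escale_omega_in_Z_omega[of 1 d] by (simp add: Escale_def)

lemma integral_trace_norm_if_Z_omega:
  assumes "z \<in> Z_omega d"
  shows "Etr z \<in> \<int> \<and> Enorm d z \<in> \<int>"
proof -
  obtain m n where z: "z = (of_int m + of_int n * fst (omega d), of_int n * snd (omega d))"
    using assms by (auto simp: Z_omega_iff)
  show ?thesis
  proof (cases "d mod 4 = 1")
    case True
    then obtain e where "d = 4 * e + 1"
      by (metis div_mult_mod_eq mult.commute)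
    then have "Enorm d z = of_int (m * m + m * n - e * n * n)"
      by (simp add: z omega_def True Enorm_def power2_eq_square field_simps)
    moreover have "Etr z = of_int (2 * m + n)"
      by (simp add: z omega_def True Etr_def)
    ultimately show ?thesis
      by simp
  next
    case False
    then show ?thesis
      by (simp add: z omega_def Etr_def Enorm_def)
  qed
qed

lemma Z_omega_if_integral_trace_norm:
  assumes "squarefree d" and "Etr z \<in> \<int>" and "Enorm d z \<in> \<int>"
  shows "z \<in> Z_omega d"
proof -
  obtain T where T: "2 * fst z = of_int T"
    using assms(2) by (auto simp: Etr_def elim: Ints_cases)
  obtain K where K: "Enorm d z = of_int K"
    using assms(3) by (elim Ints_cases)
  have "of_int d * (2 * snd z) ^ 2 = of_int (T ^ 2 - 4 * K)"
    using T K by (simp add: Enorm_def power2_eq_square algebra_simps flip: T)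
  then obtain U where U: "2 * snd z = of_int U"
    using squarefree_mult_square_in_Ints[OF assms(1)] by (metis Ints_cases Ints_of_int)
  have "of_int (T ^ 2 - d * U ^ 2) = (of_int (4 * K) :: rat)"
    using K by (simp add: Enorm_def power2_eq_square algebra_simps flip: T U)
  then have key: "T ^ 2 - d * U ^ 2 = 4 * K"
    by (simp only: of_int_eq_iff)
  show ?thesis
  proof (cases "d mod 4 = 1")
    case True
    then have "odd d"
      by presburger
    moreover have "even (T ^ 2 - d * U ^ 2)"
      by (simp add: key)
    ultimately have "even (T - U)"
      by simp
    then obtain m where "T = 2 * m + U"
      by (metis add.commute diff_add_cancel dvdE)
    then show ?thesis
      unfolding Z_omega_iff using T U True
      by (intro exI[of _ m] exI[of _ U]) (simp add: omega_def prod_eq_iff field_simps)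
  next
    case False
    have "\<not> (2 :: int) ^ 2 dvd d"
      using assms(1) unfolding squarefree_def by (metis is_unit_power_iff odd_one)
    with False have "d mod 4 \<in> {2, 3}"
      by (simp add: dvd_eq_mod_eq_0) presburger
    with key have "even T \<and> even U"
      by (intro even_of_four_dvd_square_diff) simp_all
    then obtain m n where "T = 2 * m" "U = 2 * n"
      by (auto elim!: evenE)
    then show ?thesis
      unfolding Z_omega_iff using T U False
      by (intro exI[of _ m] exI[of _ n]) (simp add: omega_def prod_eq_iff)
  qed
qed

lemma ring_of_integers_eq_Z_omega:
  assumes "imag_quad_param d"
  shows "ring_of_integers d = Z_omega d"
  using assms Z_omega_if_integral_trace_norm integral_trace_norm_if_Z_omega
  by (auto simp: imag_quad_param_def ring_of_integers_iff_algebraic_int algebraic_int_Ecomplex_iff)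

lemma Econj_Z_omega: "Econj ` Z_omega d = Z_omega d"
proof -
  have conj_in: "Econj u \<in> Z_omega d" if u: "u \<in> Z_omega d" for u
  proof -
    obtain m n where u: "u = Eadd (of_int m, 0) (Escale (of_int n) (omega d))"
      using u by (rule Z_omega_cases)
    obtain t where t: "Etr (omega d) = of_int t"
      using integral_trace_norm_if_Z_omega[OF omega_in_Z_omega] by (auto elim: Ints_cases)
    have "Econj u = Eadd (of_int (m + n * t), 0) (Escale (of_int (- n)) (omega d))"
      by (simp add: u Econj_def Eadd_def Escale_def algebra_simps flip: t) (simp add: Etr_def)
    then show ?thesis
      unfolding Z_omega_def by blast
  qed
  have "u \<in> Econj ` Z_omega d" if "u \<in> Z_omega d" for u
    using conj_in[OF that] by (rule image_eqI[rotated]) simp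
  with conj_in show ?thesis
    by blast
qed

text \<open>This is \<open>\<omega> - \<bar>\<omega>\<close>, a square root of the discriminant.\<close>

definition sqrt_disc :: "int \<Rightarrow> rat \<times> rat" where
  "sqrt_disc d = (0, 2 * snd (omega d))"

lemma Enorm_sqrt_disc: "Enorm d (sqrt_disc d) = - of_int (fund_disc d)"
  by (simp add: Enorm_def sqrt_disc_def omega_def fund_disc_def power2_eq_square)

lemma trace_zero_part_of_Z_plus_2_Z_omega:
  "{z. fst z = 0 \<and> (\<exists>k. \<exists>u\<in>Z_omega d. z = Eadd (of_int k, 0) (Escale 2 u))}
    = {Escale (of_int n) (sqrt_disc d) | n. True}"
proof (intro set_eqI iffI; elim CollectE conjE exE bexE)
  fix z k u
  assume "u \<in> Z_omega d" and z: "fst z = 0" "z = Eadd (of_int k, 0) (Escale 2 u)"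
  then obtain m n where "u = (of_int m + of_int n * fst (omega d), of_int n * snd (omega d))"
    by (auto simp: Z_omega_iff)
  with z have "z = Escale (of_int n) (sqrt_disc d)"
    by (auto simp: Eadd_def Escale_def sqrt_disc_def prod_eq_iff)
  then show "z \<in> {Escale (of_int n) (sqrt_disc d) | n. True}"
    by blast
next
  fix z n
  assume z: "z = Escale (of_int n) (sqrt_disc d)"
  have "z = Eadd (of_int (- n * (if d mod 4 = 1 then 1 else 0)), 0)
      (Escale 2 (Escale (of_int n) (omega d)))"
    by (simp add: z Eadd_def Escale_def sqrt_disc_def omega_def)
  moreover have "fst z = 0"
    by (simp add: z Escale_def sqrt_disc_def)
  ultimately show "z \<in> {z. fst z = 0 \<and> (\<exists>k. \<exists>u\<in>Z_omega d. z = Eadd (of_int k, 0) (Escale 2 u))}"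
    using Escale_omega_in_Z_omega by blast
qed

section \<open>Embeddings into the quaternion algebra\<close>

lemma qadd_Quat [simp]:
  "qadd (Quat x0 x1 x2 x3) (Quat y0 y1 y2 y3) = Quat (x0 + y0) (x1 + y1) (x2 + y2) (x3 + y3)"
  by (simp add: qadd_def)

lemma qscale_Quat [simp]: "qscale c (Quat x0 x1 x2 x3) = Quat (c * x0) (c * x1) (c * x2) (c * x3)"
  by (simp add: qscale_def)

lemma qconj_Quat [simp]: "qconj (Quat x0 x1 x2 x3) = Quat x0 (- x1) (- x2) (- x3)"
  by (simp add: qconj_def)

lemma qof_rat_inject [simp]: "qof_rat c = qof_rat c' \<longleftrightarrow> c = c'"
  by (simp add: qof_rat_def)

lemma qscale_1 [simp]: "qscale 1 x = x"
  by (cases x) simp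

locale quad_embedding =
  fixes a b :: rat and d :: int and \<iota> :: "rat \<times> rat \<Rightarrow> quat"
  assumes d_neg: "d < 0" and embedding: "quat_embedding a b d \<iota>"
begin

lemma embedding_Eadd: "\<iota> (Eadd z w) = qadd (\<iota> z) (\<iota> w)"
  using embedding unfolding quat_embedding_def by blast

lemma embedding_Escale: "\<iota> (Escale c z) = qscale c (\<iota> z)"
  using embedding unfolding quat_embedding_def by blast

lemma embedding_Emul: "\<iota> (Emul d z w) = qmul a b (\<iota> z) (\<iota> w)"
  using embedding unfolding quat_embedding_def by blast

lemma embedding_eq_iff: "\<iota> z = \<iota> w \<longleftrightarrow> z = w"
  using embedding by (simp add: quat_embedding_def inj_eq)

lemma embedding_rat: "\<iota> (c, 0) = qof_rat c"
proof -
  have "\<iota> (c, 0) = \<iota> (Escale c Eone)"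
    by (simp add: Escale_def Eone_def)
  then show ?thesis
    using embedding by (simp add: quat_embedding_def embedding_Escale qof_rat_def)
qed

text \<open>\<open>\<iota> (0, 1)\<close> squares to the negative rational \<open>d\<close>, so it has no real part.\<close>

lemma embedding_coordinates:
  obtains y1 y2 y3 where "\<And>p q. \<iota> (p, q) = Quat p (q * y1) (q * y2) (q * y3)"
proof -
  obtain x0 y1 y2 y3 where \<theta>: "\<iota> (0, 1) = Quat x0 y1 y2 y3"
    by (cases "\<iota> (0, 1)")
  have "qmul a b (\<iota> (0, 1)) (\<iota> (0, 1)) = \<iota> (of_int d, 0)"
    by (simp add: Emul_def flip: embedding_Emul)
  then have sq: "x0 * x0 + a * y1 * y1 + b * y2 * y2 - a * b * y3 * y3 = of_int d"
    and "x0 * y1 = 0" "x0 * y2 = 0" "x0 * y3 = 0"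
    by (simp_all add: \<theta> embedding_rat qmul_def qof_rat_def algebra_simps)
  have "x0 = 0"
  proof (rule ccontr)
    assume "x0 \<noteq> 0"
    with \<open>x0 * y1 = 0\<close> \<open>x0 * y2 = 0\<close> \<open>x0 * y3 = 0\<close> sq have "x0 * x0 = of_int d"
      by simp
    moreover have "x0 * x0 \<ge> 0"
      by simp
    ultimately show False
      using d_neg by simp
  qed
  have "\<iota> (p, q) = \<iota> (Eadd (p, 0) (Escale q (0, 1)))" for p q
    by (simp add: Eadd_def Escale_def)
  then have "\<iota> (p, q) = Quat p (q * y1) (q * y2) (q * y3)" for p q
    by (simp add: embedding_Eadd embedding_Escale embedding_rat \<theta> \<open>x0 = 0\<close> qof_rat_def)
  then show thesis
    by (rule that)
qed

lemma embedding_Econj: "\<iota> (Econj z) = qconj (\<iota> z)"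
proof -
  obtain y1 y2 y3 where "\<And>p q. \<iota> (p, q) = Quat p (q * y1) (q * y2) (q * y3)"
    using embedding_coordinates by blast
  then show ?thesis
    by (cases z) (simp add: Econj_def)
qed

lemma qTr_embedding: "qTr (\<iota> z) = qof_rat (Etr z)"
proof -
  obtain y1 y2 y3 where "\<And>p q. \<iota> (p, q) = Quat p (q * y1) (q * y2) (q * y3)"
    using embedding_coordinates by blast
  then show ?thesis
    by (cases z) (simp add: qTr_def Etr_def qof_rat_def)
qed

lemma qNm_embedding: "qNm a b (\<iota> z) = qof_rat (Enorm d z)"
  by (simp add: qNm_def flip: embedding_Econj embedding_Emul embedding_rat Emul_Econj)

lemma embedding_in_V_D_iff: "\<iota> z \<in> V_D \<longleftrightarrow> fst z = 0"
  by (simp add: V_D_def qTr_embedding Etr_def)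

lemma sqrt_disc_in_V_D: "\<iota> (sqrt_disc d) \<in> V_D"
  by (simp add: embedding_in_V_D_iff sqrt_disc_def)

lemma qNm_sqrt_disc: "qNm a b (\<iota> (sqrt_disc d)) = qof_rat (- of_int (fund_disc d))"
  by (simp add: qNm_embedding Enorm_sqrt_disc)

lemma trace_zero_norm_disc:
  assumes "\<iota> z \<in> V_D" and "qNm a b (\<iota> z) = qof_rat (- of_int (fund_disc d))"
  shows "z = sqrt_disc d \<or> z = Escale (- 1) (sqrt_disc d)"
proof -
  have "fst z = 0"
    using assms(1) by (simp add: embedding_in_V_D_iff)
  moreover have "of_int d * snd z ^ 2 = of_int d * (2 * snd (omega d)) ^ 2"
    using assms(2) \<open>fst z = 0\<close>
    by (simp add: qNm_embedding Enorm_def fund_disc_def omega_def power2_eq_square)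
  then have "snd z ^ 2 = (2 * snd (omega d)) ^ 2"
    using d_neg by simp
  then have "snd z = 2 * snd (omega d) \<or> snd z = - (2 * snd (omega d))"
    by (simp only: power2_eq_iff)
  ultimately show ?thesis
    by (auto simp: sqrt_disc_def Escale_def prod_eq_iff)
qed

lemma integer_multiples_of_norm_disc:
  assumes "x \<in> range \<iota> \<inter> V_D" and "qNm a b x = qof_rat (- of_int (fund_disc d))"
  shows "{qscale (of_int n) x | n :: int. True} = {\<iota> (Escale (of_int n) (sqrt_disc d)) | n. True}"
proof -
  obtain z where x: "x = \<iota> z"
    using assms(1) by blast
  have "z = sqrt_disc d \<or> z = Escale (- 1) (sqrt_disc d)"
    using trace_zero_norm_disc assms unfolding x by blast
  then obtain s :: int where s: "s * s = 1" and z: "z = Escale (of_int s) (sqrt_disc d)"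
    by (metis Escale_def mult_1 of_int_1 of_int_minus prod.collapse minus_mult_minus)
  have scale: "qscale (of_int n) x = \<iota> (Escale (of_int (n * s)) (sqrt_disc d))" for n
    by (simp add: x z Escale_def mult.assoc flip: embedding_Escale)
  show ?thesis
  proof (intro set_eqI iffI; elim CollectE exE conjE)
    fix y n
    assume "y = qscale (of_int n) x"
    then show "y \<in> {\<iota> (Escale (of_int n) (sqrt_disc d)) | n. True}"
      unfolding scale by blast
  next
    fix y n
    assume "y = \<iota> (Escale (of_int n) (sqrt_disc d))"
    then have "y = qscale (of_int (n * s)) x"
      unfolding scale by (simp add: mult.assoc s)
    then show "y \<in> {qscale (of_int n) x | n :: int. True}"
      by blast
  qed
qed

text \<open>If \<open>k + 2 w\<close> lies in \<open>\<iota>(E)\<close> then so does \<open>w\<close>, hence \<open>w \<in> \<iota>(E) \<inter> Ord = \<iota>(o\<^sub>E)\<close>.\<close>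

lemma L_lattice_image:
  assumes image: "\<iota> ` Z_omega d = range \<iota> \<inter> Ord"
  shows "range \<iota> \<inter> L_lattice Ord = {\<iota> (Escale (of_int n) (sqrt_disc d)) | n. True}"
proof -
  have "\<iota> z \<in> L_lattice Ord \<longleftrightarrow> fst z = 0 \<and> (\<exists>k. \<exists>u\<in>Z_omega d. z = Eadd (of_int k, 0) (Escale 2 u))"
    for z
  proof
    assume "\<iota> z \<in> L_lattice Ord"
    then obtain k w where "w \<in> Ord" and z: "\<iota> z = qadd (qof_rat (of_int k)) (qscale 2 w)"
      and tr: "qTr (\<iota> z) = qof_rat 0"
      unfolding L_lattice_def by blast
    have "w = \<iota> (Escale (1/2) (Eadd z (- of_int k, 0)))"
      by (cases w) (simp add: embedding_Escale embedding_Eadd embedding_rat z qof_rat_def)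
    with \<open>w \<in> Ord\<close> have "w \<in> \<iota> ` Z_omega d"
      unfolding image by blast
    then obtain u where "u \<in> Z_omega d" and "w = \<iota> u"
      by blast
    with z have "z = Eadd (of_int k, 0) (Escale 2 u)"
      by (simp add: embedding_Eadd embedding_Escale embedding_rat flip: embedding_eq_iff)
    moreover have "fst z = 0"
      using tr by (simp add: qTr_embedding Etr_def)
    ultimately show "fst z = 0 \<and> (\<exists>k. \<exists>u\<in>Z_omega d. z = Eadd (of_int k, 0) (Escale 2 u))"
      using \<open>u \<in> Z_omega d\<close> by blast
  next
    assume "fst z = 0 \<and> (\<exists>k. \<exists>u\<in>Z_omega d. z = Eadd (of_int k, 0) (Escale 2 u))"
    then obtain k u where "fst z = 0" "u \<in> Z_omega d" and z: "z = Eadd (of_int k, 0) (Escale 2 u)"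
      by blast
    then have "\<iota> u \<in> Ord" and "qTr (\<iota> z) = qof_rat 0"
      using image by (auto simp: qTr_embedding Etr_def)
    moreover have "\<iota> z = qadd (qof_rat (of_int k)) (qscale 2 (\<iota> u))"
      by (simp add: z embedding_Eadd embedding_Escale embedding_rat)
    ultimately show "\<iota> z \<in> L_lattice Ord"
      unfolding L_lattice_def by blast
  qed
  then have "range \<iota> \<inter> L_lattice Ord
      = \<iota> ` {z. fst z = 0 \<and> (\<exists>k. \<exists>u\<in>Z_omega d. z = Eadd (of_int k, 0) (Escale 2 u))}"
    by auto
  also have "\<dots> = \<iota> ` {Escale (of_int n) (sqrt_disc d) | n. True}"
    by (simp only: trace_zero_part_of_Z_plus_2_Z_omega)
  finally show ?thesis
    by blast
qed

end

section \<open>Optimal embeddings\<close>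

locale Z_omega_iso = quad_embedding +
  fixes Ord :: "quat set" and \<phi> :: "rat \<times> rat \<Rightarrow> quat"
  assumes iso_bij: "bij_betw \<phi> (Z_omega d) (range \<iota> \<inter> Ord)"
    and iso_one: "\<phi> Eone = qof_rat 1"
    and iso_add: "\<And>z w. z \<in> Z_omega d \<Longrightarrow> w \<in> Z_omega d \<Longrightarrow> \<phi> (Eadd z w) = qadd (\<phi> z) (\<phi> w)"
    and iso_mul:
      "\<And>z w. z \<in> Z_omega d \<Longrightarrow> w \<in> Z_omega d \<Longrightarrow> \<phi> (Emul d z w) = qmul a b (\<phi> z) (\<phi> w)"
begin

lemma iso_rat: "\<phi> (of_int k, 0) = qof_rat (of_int k)"
proof (induction k rule: int_induct[where k = 0])
  case base
  have "\<phi> (Eadd (0, 0) (0, 0)) = qadd (\<phi> (0, 0)) (\<phi> (0, 0))"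
    using iso_add rat_in_Z_omega[of 0 d] by simp
  then show ?case
    by (cases "\<phi> (0, 0)") (simp add: Eadd_def qof_rat_def)
next
  case (step1 i)
  have "\<phi> (Eadd (of_int i, 0) Eone) = qadd (\<phi> (of_int i, 0)) (\<phi> Eone)"
    using iso_add rat_in_Z_omega[of i d] rat_in_Z_omega[of 1 d] by (simp add: Eone_def)
  then show ?case
    using step1.IH by (simp add: Eadd_def Eone_def iso_one[unfolded Eone_def] qof_rat_def)
next
  case (step2 i)
  have "\<phi> (Eadd (of_int (i - 1), 0) Eone) = qadd (\<phi> (of_int (i - 1), 0)) (\<phi> Eone)"
    using iso_add rat_in_Z_omega[of "i - 1" d] rat_in_Z_omega[of 1 d] by (simp add: Eone_def)
  then show ?case
    using step2.IH by (cases "\<phi> (of_int (i - 1), 0)")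
      (simp add: Eadd_def Eone_def iso_one[unfolded Eone_def] qof_rat_def)
qed

lemma iso_omega:
  obtains v where "\<phi> (omega d) = \<iota> v" and "v = omega d \<or> v = Econj (omega d)"
proof -
  define \<omega> where "\<omega> = omega d"
  have \<omega>: "\<omega> \<in> Z_omega d"
    by (simp add: \<omega>_def omega_in_Z_omega)
  obtain t N where t: "Etr \<omega> = of_int t" and N: "Enorm d \<omega> = of_int N"
    using integral_trace_norm_if_Z_omega[OF \<omega>] by (auto elim!: Ints_cases)
  from \<omega> have "\<phi> \<omega> \<in> \<phi> ` Z_omega d"
    by blast
  then obtain v where v: "\<phi> \<omega> = \<iota> v"
    using iso_bij by (auto simp: bij_betw_def)
  have t\<omega>: "Emul d (of_int t, 0) \<omega> \<in> Z_omega d"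
    by (simp add: \<omega>_def Emul_rat_left Escale_omega_in_Z_omega)
  have "\<iota> (Emul d v v) = \<phi> (Emul d \<omega> \<omega>)"
    using iso_mul[OF \<omega> \<omega>] by (simp add: v embedding_Emul)
  also have "Emul d \<omega> \<omega> = Eadd (Emul d (of_int t, 0) \<omega>) (of_int (- N), 0)"
    by (simp add: Emul_self_eq Emul_rat_left t N)
  also have "\<phi> \<dots> = \<iota> (Eadd (Emul d (of_int t, 0) v) (of_int (- N), 0))"
    using iso_add[OF t\<omega> rat_in_Z_omega[of "- N"]] iso_mul[OF rat_in_Z_omega \<omega>] iso_rat[of "- N"]
    by (simp add: v iso_rat embedding_Eadd embedding_Emul embedding_rat)
  finally have "Emul d v v = Eadd (Escale (Etr \<omega>) v) (- Enorm d \<omega>, 0)"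
    by (simp add: embedding_eq_iff Emul_rat_left t N)
  then show thesis
    using that v char_poly_root_cases[OF d_neg] by (auto simp: \<omega>_def)
qed

lemma iso_eq_embedding_comp:
  obtains \<sigma> where "\<sigma> = id \<or> \<sigma> = Econj" and "\<And>u. u \<in> Z_omega d \<Longrightarrow> \<phi> u = \<iota> (\<sigma> u)"
proof -
  obtain v where v: "\<phi> (omega d) = \<iota> v" and v_cases: "v = omega d \<or> v = Econj (omega d)"
    by (rule iso_omega)
  define \<sigma> where "\<sigma> = (if v = omega d then id else Econj)"
  have "\<phi> u = \<iota> (\<sigma> u)" if u_in: "u \<in> Z_omega d" for u
  proof -
    obtain m n where u: "u = Eadd (of_int m, 0) (Escale (of_int n) (omega d))"
      using u_in by (rule Z_omega_cases)
    have "\<phi> u = qadd (\<phi> (of_int m, 0)) (\<phi> (Emul d (of_int n, 0) (omega d)))"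
      using iso_add[OF rat_in_Z_omega Escale_omega_in_Z_omega] by (simp add: u Emul_rat_left)
    also have "\<dots> = qadd (qof_rat (of_int m)) (qmul a b (qof_rat (of_int n)) (\<iota> v))"
      using iso_mul[OF rat_in_Z_omega omega_in_Z_omega] by (simp add: iso_rat v)
    also have "\<dots> = \<iota> (Eadd (of_int m, 0) (Emul d (of_int n, 0) v))"
      by (simp add: embedding_Eadd embedding_Emul embedding_rat)
    also have "\<dots> = \<iota> (\<sigma> u)"
      using v_cases by (auto simp: u \<sigma>_def Emul_rat_left Econj_Eadd Econj_Escale)
    finally show ?thesis .
  qed
  moreover have "\<sigma> = id \<or> \<sigma> = Econj"
    by (simp add: \<sigma>_def)
  ultimately show thesis
    using that by blast
qed

lemma embedding_image_Z_omega: "\<iota> ` Z_omega d = range \<iota> \<inter> Ord"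
proof -
  obtain \<sigma> where \<sigma>: "\<sigma> = id \<or> \<sigma> = Econj" and \<phi>: "\<And>u. u \<in> Z_omega d \<Longrightarrow> \<phi> u = \<iota> (\<sigma> u)"
    using iso_eq_embedding_comp by blast
  have "\<iota> ` Z_omega d = \<iota> ` \<sigma> ` Z_omega d"
    using \<sigma> Econj_Z_omega by auto
  also have "\<dots> = \<phi> ` Z_omega d"
    by (simp add: image_image \<phi>)
  also have "\<dots> = range \<iota> \<inter> Ord"
    using iso_bij by (simp add: bij_betw_def)
  finally show ?thesis .
qed

end

theorem lemma3p2:
  fixes a b :: rat and Ord :: "quat set" and d :: int and \<iota> :: "rat \<times> rat \<Rightarrow> quat"
  assumes "definite_quat_params a b"
    and "eichler_order a b Ord"
    and "imag_quad_param d"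
    and "\<iota> \<in> optimal_embeddings a b d Ord"
  shows "\<iota> ` ring_of_integers d = range \<iota> \<inter> Ord
    \<and> (\<exists>x \<in> range \<iota> \<inter> V_D. qNm a b x = qof_rat (- of_int (fund_disc d)))
    \<and> (\<forall>x \<in> range \<iota> \<inter> V_D. qNm a b x = qof_rat (- of_int (fund_disc d)) \<longrightarrow>
         x \<in> range \<iota> \<inter> L_lattice Ord \<and>
         {qscale (of_int n) x | n :: int. True} = range \<iota> \<inter> L_lattice Ord)"
proof -
  have O_E: "ring_of_integers d = Z_omega d"
    using assms(3) by (rule ring_of_integers_eq_Z_omega)
  obtain \<phi> where "Z_omega_iso a b d \<iota> Ord \<phi>"
    using assms(3,4) by (auto simp: Z_omega_iso_def quad_embedding_def Z_omega_iso_axioms_def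
      optimal_embeddings_def imag_quad_param_def O_E)
  then interpret Z_omega_iso a b d \<iota> Ord \<phi> .
  have L: "range \<iota> \<inter> L_lattice Ord = {\<iota> (Escale (of_int n) (sqrt_disc d)) | n. True}"
    by (rule L_lattice_image[OF embedding_image_Z_omega])
  show ?thesis
  proof (intro conjI ballI impI)
    show "\<iota> ` ring_of_integers d = range \<iota> \<inter> Ord"
      using embedding_image_Z_omega by (simp add: O_E)
    show "\<exists>x \<in> range \<iota> \<inter> V_D. qNm a b x = qof_rat (- of_int (fund_disc d))"
      using sqrt_disc_in_V_D qNm_sqrt_disc by blast
    fix x
    assume "x \<in> range \<iota> \<inter> V_D" and "qNm a b x = qof_rat (- of_int (fund_disc d))"
    then show multiples: "{qscale (of_int n) x | n :: int. True} = range \<iota> \<inter> L_lattice Ord"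
      using integer_multiples_of_norm_disc L by simp
    have "x = qscale (of_int 1) x"
      by simp
    then show "x \<in> range \<iota> \<inter> L_lattice Ord"
      unfolding multiples[symmetric] by blast
  qed
qed

end
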